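(* Let $g=(g_1,\dots,g_m)$ be real polynomials in $x\in\mathbb R^n$ with $V_{\mathbb R}(g)\neq\emptyset$, and let $d\ge1$. (i) If $V_{\mathbb R}(g)$ is compact, then for $f\in\mathbb R[x]_{\le d}$: $\delta_g(f)>0\iff f\in\operatorname{int}P_d(g)$, and $\delta_g(f)=0\iff f\in\partial P_d(g)$. (ii) If $V^h_{\mathbb R}(g)$ is closed at $\infty$, then for $f\in\mathbb R[x]_{\le d}$: $\delta^h_g(f)>0\iff f\in\operatorname{int}P_d(g)$, and $\delta^h_g(f)=0\iff f\in\partial P_d(g)$.
   Context: $\mathbb R[x]_{\le d}$ is the finite-dimensional space of real polynomials in $x=(x_1,\dots,x_n)$ of degree at most $d$; interior and boundary are taken there in the Euclidean topology. $V_{\mathbb R}(g)=\{x\in\mathbb R^n:g_1(x)=\dots=g_m(x)=0\}$ and $P_d(g)=\{f\in\mathbb R[x]_{\le d}: f(x)\ge0\ \forall x\in V_{\mathbb R}(g)\}$. With $\tilde x=(x_0,x_1,\dots,x_n)$: for $f\in\mathbb R[x]_{\le d}$, $f^h(\tilde x)=x_0^df(x/x_0)$; for each $g_i$ of degree $d_i$, $g_i^h(\tilde x)=x_0^{d_i}g_i(x/x_0)$. $V^h_{\mathbb R}(g)=\{\tilde x\in\mathbb R^{n+1}:g_1^h(\tilde x)=\dots=g_m^h(\tilde x)=0\}$; it is closed at $\infty$ if $V^h_{\mathbb R}(g)\cap\{x_0\ge0\}$ equals the Euclidean closure of $V^h_{\mathbb R}(g)\cap\{x_0>0\}$. Define $\delta_g(f)=\min_{x\in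 V_{\mathbb R}(g)}f(x)$ and $\delta^h_g(f)=\min\{f^h(\tilde x):\tilde x\in V^h_{\mathbb R}(g),\ \|\tilde x\|_2=1,\ x_0\ge0\}$. *)

theory Defs
  imports "HOL-Analysis.Analysis"
begin

text \<open>Real polynomials in the variables indexed by the finite type 'n are represented
  by their coefficient functions on monomials (exponent vectors 'n \<Rightarrow> nat).  Points of R^n are vectors real^'n;
  points of R^(n+1) are pairs (x0, x) :: real \<times> (real^'n) (Euclidean norm).\<close>

type_synonym 'n mpoly_c = "('n \<Rightarrow> nat) \<Rightarrow> real"

definition mdeg :: "('n::finite \<Rightarrow> nat) \<Rightarrow> nat" where
  "mdeg \<alpha> = (\<Sum>i\<in>UNIV. \<alpha> i)"

definition is_poly :: "'n mpoly_c \<Rightarrow> bool" where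
  "is_poly c \<longleftrightarrow> finite {\<alpha>. c \<alpha> \<noteq> 0}"

definition pdeg :: "('n::finite) mpoly_c \<Rightarrow> nat" where
  "pdeg c = Max (insert 0 (mdeg ` {\<alpha>. c \<alpha> \<noteq> 0}))"

definition peval :: "('n::finite) mpoly_c \<Rightarrow> real^'n \<Rightarrow> real" where
  "peval c x = (\<Sum>\<alpha>\<in>{\<alpha>. c \<alpha> \<noteq> 0}. c \<alpha> * (\<Prod>i\<in>UNIV. (x $ i) ^ \<alpha> i))"

text \<open>Homogenization with respect to a given degree e: x0^e * c(x/x0).\<close>
definition hom_eval :: "nat \<Rightarrow> ('n::finite) mpoly_c \<Rightarrow> real \<times> (real^'n) \<Rightarrow> real" where
  "hom_eval e c y = (\<Sum>\<alpha>\<in>{\<alpha>. c \<alpha> \<noteq> 0}.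
      c \<alpha> * fst y ^ (e - mdeg \<alpha>) * (\<Prod>i\<in>UNIV. (snd y $ i) ^ \<alpha> i))"

definition PolySp :: "nat \<Rightarrow> ('n::finite) mpoly_c set" where
  "PolySp d = {c. \<forall>\<alpha>. c \<alpha> \<noteq> 0 \<longrightarrow> mdeg \<alpha> \<le> d}"

definition VR :: "('n::finite) mpoly_c list \<Rightarrow> (real^'n) set" where
  "VR gs = {x. \<forall>g\<in>set gs. peval g x = 0}"

definition VRh :: "('n::finite) mpoly_c list \<Rightarrow> (real \<times> (real^'n)) set" where
  "VRh gs = {y. \<forall>g\<in>set gs. hom_eval (pdeg g) g y = 0}"

definition closed_at_infinity :: "('n::finite) mpoly_c list \<Rightarrow> bool" where
  "closed_at_infinity gs \<longleftrightarrow>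
     VRh gs \<inter> {y. fst y \<ge> 0} = closure (VRh gs \<inter> {y. fst y > 0})"

definition Pd :: "nat \<Rightarrow> ('n::finite) mpoly_c list \<Rightarrow> ('n::finite) mpoly_c set" where
  "Pd d gs = {f \<in> PolySp d. \<forall>x\<in>VR gs. peval f x \<ge> 0}"

definition delta :: "('n::finite) mpoly_c list \<Rightarrow> ('n::finite) mpoly_c \<Rightarrow> real" where
  "delta gs f = Inf (peval f ` VR gs)"

definition delta_h :: "nat \<Rightarrow> ('n::finite) mpoly_c list \<Rightarrow> ('n::finite) mpoly_c \<Rightarrow> real" where
  "delta_h d gs f = Inf (hom_eval d f ` {y \<in> VRh gs. norm y = 1 \<and> fst y \<ge> 0})"

text \<open>Euclidean topology on R[x]_{<= d}: the (product) topology on coefficient functions,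
  restricted to the finite-dimensional subspace PolySp d.\<close>
abbreviation PolyTop :: "nat \<Rightarrow> ('n::finite) mpoly_c topology" where
  "PolyTop d \<equiv> subtopology euclidean (PolySp d)"

end

theory Submission
  imports Defs
begin

text \<open>Both parts of the theorem are instances of one abstract fact about cones of
  coefficient vectors.  Fix a finite index set \<open>M\<close> (monomials) and real weights \<open>w \<alpha> y\<close>
  indexed by points \<open>y\<close> of a nonempty set \<open>S\<close>; a coefficient vector \<open>c\<close> supported on \<open>M\<close>
  gives the function \<open>y \<mapsto> \<Sum>\<alpha>\<in>M. c \<alpha> * w \<alpha> y\<close>.  If the weights are bounded on \<open>S\<close> and
  nondegenerate (at every \<open>y\<close> some weight has size at least a fixed \<open>\<kappa> > 0\<close>), then in
  the cone of vectors whose function is nonnegative on \<open>S\<close>, the interior consists exactly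
  of the vectors with positive infimum (margin), and the boundary of those with margin 0.
  Boundedness makes a positive margin stable under small coefficient changes; nondegeneracy
  makes an interior point, shifted by a fixed amount in each single coefficient, keep a
  positive margin.

  Part (i) instantiates it with the monomials on the compact variety \<open>V(g)\<close> (bounded there,
  nondegenerate through the constant monomial).  Part (ii) instantiates it with the
  homogenized monomials on the nonnegative half of the unit sphere in the homogenized
  variety; closedness at infinity is used exactly once, to identify the resulting cone with
  \<open>P_d(g)\<close>, and nondegeneracy comes from the powers \<open>x\<^sub>0^d, x\<^sub>j^d\<close> of a unit vector.\<close>

definition supported :: "'a set \<Rightarrow> ('a \<Rightarrow> real) set" where
  "supported M = {c. \<forall>\<alpha>. \<alpha> \<notin> M \<longrightarrow> c \<alpha> = 0}"

definition lin_eval :: "'a set \<Rightarrow> ('a \<Rightarrow> 'y \<Rightarrow> real) \<Rightarrow> ('a \<Rightarrow> real) \<Rightarrow> 'y \<Rightarrow> real" where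
  "lin_eval M w c y = (\<Sum>\<alpha>\<in>M. c \<alpha> * w \<alpha> y)"

definition nonneg_cone :: "'a set \<Rightarrow> ('a \<Rightarrow> 'y \<Rightarrow> real) \<Rightarrow> 'y set \<Rightarrow> ('a \<Rightarrow> real) set" where
  "nonneg_cone M w S = {c \<in> supported M. \<forall>y\<in>S. 0 \<le> lin_eval M w c y}"

definition unit_shift :: "('a \<Rightarrow> real) \<Rightarrow> 'a \<Rightarrow> real \<Rightarrow> 'a \<Rightarrow> real" where
  "unit_shift f \<alpha> t = (\<lambda>\<beta>. f \<beta> + t * (if \<beta> = \<alpha> then 1 else 0))"

lemma lin_eval_diff_bound:
  assumes "finite M" "\<forall>\<alpha>\<in>M. \<bar>h \<alpha> - f \<alpha>\<bar> \<le> r" "\<forall>\<alpha>\<in>M. \<bar>w \<alpha> y\<bar> \<le> W"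
  shows "\<bar>lin_eval M w h y - lin_eval M w f y\<bar> \<le> real (card M) * (r * W)"
proof -
  have "\<bar>lin_eval M w h y - lin_eval M w f y\<bar> = \<bar>\<Sum>\<alpha>\<in>M. (h \<alpha> - f \<alpha>) * w \<alpha> y\<bar>"
    by (simp add: lin_eval_def sum_subtractf left_diff_distrib)
  also have "\<dots> \<le> (\<Sum>\<alpha>\<in>M. \<bar>h \<alpha> - f \<alpha>\<bar> * \<bar>w \<alpha> y\<bar>)"
    using sum_abs by (metis (no_types, lifting) abs_mult sum.cong)
  also have "\<dots> \<le> (\<Sum>\<alpha>\<in>M. r * W)"
    using assms(2,3) by (intro sum_mono mult_mono) auto
  finally show ?thesis by simp
qed

lemma lin_eval_unit_shift:
  assumes "finite M" "\<alpha> \<in> M"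
  shows "lin_eval M w (unit_shift f \<alpha> t) y = lin_eval M w f y + t * w \<alpha> y"
proof -
  have "(\<Sum>\<beta>\<in>M. t * (if \<beta> = \<alpha> then 1 else 0) * w \<beta> y) = t * w \<alpha> y"
    using assms by (simp add: if_distrib[of "\<lambda>x. t * x * _"] cong: if_cong)
  then show ?thesis by (simp add: lin_eval_def unit_shift_def distrib_right sum.distrib)
qed

lemma open_coeff_box:
  fixes f :: "'a \<Rightarrow> real"
  assumes "finite M"
  shows "open {h. \<forall>\<alpha>\<in>M. \<bar>h \<alpha> - f \<alpha>\<bar> < r}"
proof -
  have "{h. \<forall>\<alpha>\<in>M. \<bar>h \<alpha> - f \<alpha>\<bar> < r} = (\<Inter>\<alpha>\<in>M. {h. \<bar>h \<alpha> - f \<alpha>\<bar> < r})" by auto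
  also have "open \<dots>"
    using assms by (intro open_INT ballI open_Collect_less continuous_intros) auto
  finally show ?thesis .
qed

lemma open_unit_shifts:
  fixes U :: "('a \<Rightarrow> real) set"
  assumes "open U" "f \<in> U" "finite M"
  shows "\<exists>\<epsilon>>0. \<forall>\<alpha>\<in>M. \<forall>t. \<bar>t\<bar> < \<epsilon> \<longrightarrow> unit_shift f \<alpha> t \<in> U"
proof -
  have cont: "continuous_on UNIV (unit_shift f \<alpha>)" for \<alpha>
    unfolding unit_shift_def by (intro continuous_intros)
  have "open (\<Inter>\<alpha>\<in>M. unit_shift f \<alpha> -` U)"
    using assms cont by (intro open_INT ballI open_vimage) auto
  moreover have "0 \<in> (\<Inter>\<alpha>\<in>M. unit_shift f \<alpha> -` U)"
    using assms(2) by (simp add: unit_shift_def)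
  ultimately obtain \<epsilon> where "\<epsilon> > 0" "ball 0 \<epsilon> \<subseteq> (\<Inter>\<alpha>\<in>M. unit_shift f \<alpha> -` U)"
    by (meson open_contains_ball)
  then show ?thesis by (intro exI[of _ \<epsilon>]) (auto simp: subset_iff dist_real_def)
qed

locale coefficient_frame =
  fixes M :: "'a set" and w :: "'a \<Rightarrow> 'y \<Rightarrow> real" and S :: "'y set"
  assumes finite_M: "finite M"
    and S_nonempty: "S \<noteq> {}"
    and weights_bounded: "\<exists>W. \<forall>y\<in>S. \<forall>\<alpha>\<in>M. \<bar>w \<alpha> y\<bar> \<le> W"
    and weights_nondegenerate: "\<exists>\<kappa>>0. \<forall>y\<in>S. \<exists>\<alpha>\<in>M. \<kappa> \<le> \<bar>w \<alpha> y\<bar>"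
begin

abbreviation coeff_top :: "('a \<Rightarrow> real) topology" where
  "coeff_top \<equiv> top_of_set (supported M)"

text \<open>The margin of \<open>f\<close> is \<open>Inf (lin_eval M w f ` S)\<close>; it is a genuine infimum because
  the values are bounded below.\<close>
lemma bdd_below_values: "bdd_below (lin_eval M w f ` S)"
proof -
  obtain W where W: "\<forall>y\<in>S. \<forall>\<alpha>\<in>M. \<bar>w \<alpha> y\<bar> \<le> W"
    using weights_bounded by blast
  have "\<bar>lin_eval M w f y - lin_eval M w (\<lambda>_. 0) y\<bar> \<le> real (card M) * ((\<Sum>\<alpha>\<in>M. \<bar>f \<alpha>\<bar>) * W)"
    if "y \<in> S" for y
    using finite_M W that by (intro lin_eval_diff_bound) (auto intro: member_le_sum)
  then have "- (real (card M) * ((\<Sum>\<alpha>\<in>M. \<bar>f \<alpha>\<bar>) * W)) \<le> lin_eval M w f y" if "y \<in> S" for y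
    using that by (force simp: lin_eval_def)
  then show ?thesis by (intro bdd_belowI2)
qed

lemma margin_le_value: "y \<in> S \<Longrightarrow> Inf (lin_eval M w f ` S) \<le> lin_eval M w f y"
  using bdd_below_values by (intro cInf_lower) auto

lemma margin_ge_iff: "c \<le> Inf (lin_eval M w f ` S) \<longleftrightarrow> (\<forall>y\<in>S. c \<le> lin_eval M w f y)"
  using S_nonempty bdd_below_values by (simp add: le_cInf_iff)

lemma cone_iff_margin_nonneg:
  "f \<in> supported M \<Longrightarrow> f \<in> nonneg_cone M w S \<longleftrightarrow> 0 \<le> Inf (lin_eval M w f ` S)"
  by (simp add: nonneg_cone_def margin_ge_iff)

text \<open>The cone is an intersection of closed half-spaces, hence closed.\<close>
lemma closedin_cone: "closedin coeff_top (nonneg_cone M w S)"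
proof -
  have "nonneg_cone M w S = supported M \<inter> (\<Inter>y\<in>S. {c. 0 \<le> lin_eval M w c y})"
    by (auto simp: nonneg_cone_def)
  moreover have "closed (\<Inter>y\<in>S. {c. 0 \<le> lin_eval M w c y})"
    unfolding lin_eval_def by (intro closed_INT ballI closed_Collect_le continuous_intros) auto
  ultimately show ?thesis by (auto simp: closedin_closed)
qed

lemma unit_shift_supported: "f \<in> supported M \<Longrightarrow> \<alpha> \<in> M \<Longrightarrow> unit_shift f \<alpha> t \<in> supported M"
  by (auto simp: supported_def unit_shift_def)

text \<open>A uniformly positive functional stays nonnegative on a whole box of coefficients,
  because the weights are bounded on \<open>S\<close>.\<close>
lemma positive_margin_imp_interior:
  assumes f: "f \<in> supported M" and pos: "0 < Inf (lin_eval M w f ` S)"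
  shows "f \<in> coeff_top interior_of nonneg_cone M w S"
proof -
  define \<delta> where "\<delta> = Inf (lin_eval M w f ` S)"
  obtain W where W: "\<forall>y\<in>S. \<forall>\<alpha>\<in>M. \<bar>w \<alpha> y\<bar> \<le> W"
    using weights_bounded by blast
  define r where "r = \<delta> / (real (card M) * \<bar>W\<bar> + 1)"
  have den: "0 < real (card M) * \<bar>W\<bar> + 1" by (simp add: add_nonneg_pos)
  have r: "0 < r" "real (card M) * (r * W) < \<delta>"
  proof -
    show "0 < r" using pos den by (simp add: r_def \<delta>_def)
    have "real (card M) * (r * W) \<le> real (card M) * (r * \<bar>W\<bar>)"
      using \<open>0 < r\<close> by (intro mult_left_mono) auto
    also have "\<dots> = r * (real (card M) * \<bar>W\<bar>)" by (simp only: ac_simps)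
    also have "\<dots> < r * (real (card M) * \<bar>W\<bar> + 1)" using \<open>0 < r\<close> by simp
    also have "\<dots> = \<delta>" using den by (simp add: r_def)
    finally show "real (card M) * (r * W) < \<delta>" .
  qed
  define T where "T = supported M \<inter> {h. \<forall>\<alpha>\<in>M. \<bar>h \<alpha> - f \<alpha>\<bar> < r}"
  have "openin coeff_top T"
    unfolding T_def openin_open using open_coeff_box[OF finite_M] by blast
  moreover have "f \<in> T" using f r by (simp add: T_def)
  moreover have "T \<subseteq> nonneg_cone M w S"
  proof
    fix h assume h: "h \<in> T"
    have "0 \<le> lin_eval M w h y" if y: "y \<in> S" for y
    proof -
      have "\<bar>lin_eval M w h y - lin_eval M w f y\<bar> \<le> real (card M) * (r * W)"
        using h W y finite_M by (intro lin_eval_diff_bound) (auto simp: T_def less_imp_le)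
      moreover have "\<delta> \<le> lin_eval M w f y" using margin_le_value[OF y] by (simp add: \<delta>_def)
      ultimately show ?thesis using r by linarith
    qed
    then show "h \<in> nonneg_cone M w S" using h by (simp add: T_def nonneg_cone_def)
  qed
  ultimately show ?thesis using interior_of_maximal by blast
qed

text \<open>Conversely, an interior point survives shifting any single coefficient by a fixed
  amount of either sign; nondegeneracy of the weights turns this into a positive margin.\<close>
lemma interior_imp_positive_margin:
  assumes int: "f \<in> coeff_top interior_of nonneg_cone M w S"
  shows "0 < Inf (lin_eval M w f ` S)"
proof -
  obtain T where T: "openin coeff_top T" "f \<in> T" "T \<subseteq> nonneg_cone M w S"
    using int by (auto simp: interior_of_def)
  then obtain U where U: "open U" "T = supported M \<inter> U" by (auto simp: openin_open)
  have f: "f \<in> supported M" using T U by blast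
  obtain \<epsilon> where \<epsilon>: "\<epsilon> > 0" "\<forall>\<alpha>\<in>M. \<forall>t. \<bar>t\<bar> < \<epsilon> \<longrightarrow> unit_shift f \<alpha> t \<in> U"
    using open_unit_shifts[OF U(1) _ finite_M] T U by blast
  have shift_bound: "\<epsilon> / 2 * \<bar>w \<alpha> y\<bar> \<le> lin_eval M w f y" if y: "y \<in> S" and \<alpha>: "\<alpha> \<in> M" for y \<alpha>
  proof -
    define t where "t = (if w \<alpha> y \<ge> 0 then - (\<epsilon> / 2) else \<epsilon> / 2)"
    have "\<bar>t\<bar> < \<epsilon>" using \<epsilon>(1) by (simp add: t_def)
    then have "unit_shift f \<alpha> t \<in> T"
      using \<epsilon>(2) \<alpha> U(2) unit_shift_supported[OF f \<alpha>] by blast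
    then have "0 \<le> lin_eval M w (unit_shift f \<alpha> t) y"
      using T(3) y by (auto simp: nonneg_cone_def)
    moreover have "t * w \<alpha> y = - (\<epsilon> / 2 * \<bar>w \<alpha> y\<bar>)" by (simp add: t_def)
    ultimately show ?thesis by (simp add: lin_eval_unit_shift[OF finite_M \<alpha>])
  qed
  obtain \<kappa> where \<kappa>: "\<kappa> > 0" "\<forall>y\<in>S. \<exists>\<alpha>\<in>M. \<kappa> \<le> \<bar>w \<alpha> y\<bar>"
    using weights_nondegenerate by blast
  have "\<epsilon> / 2 * \<kappa> \<le> lin_eval M w f y" if y: "y \<in> S" for y
  proof -
    obtain \<alpha> where "\<alpha> \<in> M" "\<kappa> \<le> \<bar>w \<alpha> y\<bar>" using \<kappa> y by blast
    then have "\<epsilon> / 2 * \<kappa> \<le> \<epsilon> / 2 * \<bar>w \<alpha> y\<bar>" using \<epsilon>(1) by simp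
    also have "\<dots> \<le> lin_eval M w f y" by (rule shift_bound[OF y \<open>\<alpha> \<in> M\<close>])
    finally show ?thesis .
  qed
  then have "\<epsilon> / 2 * \<kappa> \<le> Inf (lin_eval M w f ` S)" by (simp add: margin_ge_iff)
  moreover have "0 < \<epsilon> / 2 * \<kappa>" using \<epsilon> \<kappa> by simp
  ultimately show ?thesis by linarith
qed

theorem margin_characterization:
  assumes f: "f \<in> supported M"
  shows "(0 < Inf (lin_eval M w f ` S) \<longleftrightarrow> f \<in> coeff_top interior_of nonneg_cone M w S) \<and>
         (Inf (lin_eval M w f ` S) = 0 \<longleftrightarrow> f \<in> coeff_top frontier_of nonneg_cone M w S)"
proof -
  have interior: "0 < Inf (lin_eval M w f ` S) \<longleftrightarrow> f \<in> coeff_top interior_of nonneg_cone M w S"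
    using positive_margin_imp_interior[OF f] interior_imp_positive_margin by blast
  have "coeff_top frontier_of nonneg_cone M w S =
        nonneg_cone M w S - coeff_top interior_of nonneg_cone M w S"
    by (simp add: frontier_of_def closure_of_closedin[OF closedin_cone])
  then have "f \<in> coeff_top frontier_of nonneg_cone M w S \<longleftrightarrow>
             0 \<le> Inf (lin_eval M w f ` S) \<and> \<not> 0 < Inf (lin_eval M w f ` S)"
    using interior cone_iff_margin_nonneg[OF f] by blast
  moreover have "Inf (lin_eval M w f ` S) = 0 \<longleftrightarrow>
             0 \<le> Inf (lin_eval M w f ` S) \<and> \<not> 0 < Inf (lin_eval M w f ` S)"
    by linarith
  ultimately show ?thesis using interior by blast
qed

end


definition Mset :: "nat \<Rightarrow> ('n::finite \<Rightarrow> nat) set" where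
  "Mset d = {\<alpha>. mdeg \<alpha> \<le> d}"

definition mmono :: "('n::finite \<Rightarrow> nat) \<Rightarrow> real^'n \<Rightarrow> real" where
  "mmono \<alpha> x = (\<Prod>i\<in>UNIV. (x $ i) ^ \<alpha> i)"

definition hmono :: "nat \<Rightarrow> ('n::finite \<Rightarrow> nat) \<Rightarrow> real \<times> (real^'n) \<Rightarrow> real" where
  "hmono e \<alpha> y = fst y ^ (e - mdeg \<alpha>) * mmono \<alpha> (snd y)"

lemma finite_Mset: "finite (Mset d :: ('n::finite \<Rightarrow> nat) set)"
proof -
  have "Mset d \<subseteq> PiE (UNIV::'n set) (\<lambda>_. {..d})"
  proof
    fix \<alpha> :: "'n \<Rightarrow> nat" assume "\<alpha> \<in> Mset d"
    then have "\<alpha> i \<le> d" for i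
      using member_le_sum[of i UNIV \<alpha>] by (simp add: Mset_def mdeg_def)
    then show "\<alpha> \<in> PiE UNIV (\<lambda>_. {..d})" by auto
  qed
  moreover have "finite (PiE (UNIV::'n set) (\<lambda>_. {..d}))" by (intro finite_PiE) auto
  ultimately show ?thesis by (rule finite_subset)
qed

lemma PolySp_eq_supported: "PolySp d = supported (Mset d)"
  by (auto simp: PolySp_def supported_def Mset_def)

lemma peval_eq_lin_eval:
  assumes "f \<in> PolySp d"
  shows "peval f x = lin_eval (Mset d) mmono f x"
  unfolding peval_def lin_eval_def mmono_def
  using assms by (intro sum.mono_neutral_left finite_Mset) (auto simp: PolySp_def Mset_def)

lemma mmono_scaleR: "mmono \<alpha> (s *\<^sub>R z) = s ^ mdeg \<alpha> * mmono \<alpha> z"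
  by (simp add: mmono_def mdeg_def power_mult_distrib prod.distrib power_sum)

lemma hom_eval_hmono: "hom_eval e c y = (\<Sum>\<alpha>\<in>{\<alpha>. c \<alpha> \<noteq> 0}. c \<alpha> * hmono e \<alpha> y)"
  by (simp add: hom_eval_def hmono_def mmono_def mult.assoc)

lemma hom_eval_eq_lin_eval:
  assumes "f \<in> PolySp d"
  shows "hom_eval d f y = lin_eval (Mset d) (hmono d) f y"
  unfolding hom_eval_hmono lin_eval_def
  using assms by (intro sum.mono_neutral_left finite_Mset) (auto simp: PolySp_def Mset_def)

lemma hom_eval_one: "hom_eval e c (1, x) = peval c x"
  by (simp add: hom_eval_def peval_def)

lemma hmono_scale:
  assumes "mdeg \<alpha> \<le> e"
  shows "hmono e \<alpha> (s * a, s *\<^sub>R z) = s ^ e * hmono e \<alpha> (a, z)"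
proof -
  have "hmono e \<alpha> (s * a, s *\<^sub>R z) = (s ^ (e - mdeg \<alpha>) * s ^ mdeg \<alpha>) * hmono e \<alpha> (a, z)"
    by (simp add: hmono_def mmono_scaleR power_mult_distrib)
  also have "s ^ (e - mdeg \<alpha>) * s ^ mdeg \<alpha> = s ^ e"
    using assms by (simp flip: power_add)
  finally show ?thesis .
qed

lemma hom_eval_scale:
  assumes "\<forall>\<alpha>. c \<alpha> \<noteq> 0 \<longrightarrow> mdeg \<alpha> \<le> e"
  shows "hom_eval e c (s * a, s *\<^sub>R z) = s ^ e * hom_eval e c (a, z)"
  unfolding hom_eval_hmono sum_distrib_left
  using assms by (intro sum.cong refl) (simp add: hmono_scale)

lemma mdeg_le_pdeg: "is_poly g \<Longrightarrow> g \<alpha> \<noteq> 0 \<Longrightarrow> mdeg \<alpha> \<le> pdeg g"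
  unfolding pdeg_def is_poly_def by (intro Max_ge) auto

lemma VR_to_VRh:
  assumes polys: "\<forall>g\<in>set gs. is_poly g" and x: "x \<in> VR gs"
  shows "(s, s *\<^sub>R x) \<in> VRh gs"
proof -
  have "hom_eval (pdeg g) g (s * 1, s *\<^sub>R x) = s ^ pdeg g * hom_eval (pdeg g) g (1, x)"
    if "g \<in> set gs" for g
    by (rule hom_eval_scale) (use mdeg_le_pdeg polys that in blast)
  then show ?thesis using x by (simp add: VRh_def VR_def hom_eval_one)
qed

lemma VRh_to_VR:
  assumes polys: "\<forall>g\<in>set gs. is_poly g" and y: "(a, z) \<in> VRh gs" and a: "a > 0"
  shows "(1 / a) *\<^sub>R z \<in> VR gs"
proof -
  have "hom_eval (pdeg g) g (a * 1, a *\<^sub>R ((1 / a) *\<^sub>R z)) =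
        a ^ pdeg g * hom_eval (pdeg g) g (1, (1 / a) *\<^sub>R z)" if "g \<in> set gs" for g
    by (rule hom_eval_scale) (use mdeg_le_pdeg polys that in blast)
  moreover have "(a * 1, a *\<^sub>R ((1 / a) *\<^sub>R z)) = (a, z)" using a by simp
  ultimately show ?thesis using y a by (simp add: VRh_def VR_def hom_eval_one)
qed

lemma mmono_bound:
  assumes "\<forall>i. \<bar>x $ i\<bar> \<le> K"
  shows "\<bar>mmono \<alpha> x\<bar> \<le> K ^ mdeg \<alpha>"
proof -
  have "\<bar>mmono \<alpha> x\<bar> = (\<Prod>i\<in>UNIV. \<bar>x $ i\<bar> ^ \<alpha> i)" by (simp add: mmono_def abs_prod power_abs)
  also have "\<dots> \<le> (\<Prod>i\<in>UNIV. K ^ \<alpha> i)"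
    by (rule prod_mono) (use assms in \<open>auto intro: power_mono\<close>)
  also have "\<dots> = K ^ mdeg \<alpha>" by (simp add: mdeg_def power_sum)
  finally show ?thesis .
qed

lemma mmono_const [simp]: "mmono (\<lambda>_. 0) x = 1"
  by (simp add: mmono_def)

lemma const_in_Mset [simp]: "(\<lambda>_. 0) \<in> Mset d"
  by (simp add: Mset_def mdeg_def)

text \<open>Part (i): on a compact variety the monomials are bounded, and the constant monomial
  is identically one, so the monomial evaluations form a nondegenerate frame.\<close>
lemma affine_frame:
  assumes nonempty: "VR gs \<noteq> {}" and cpt: "compact (VR gs)"
  shows "coefficient_frame (Mset d) mmono (VR gs)"
proof
  obtain R where R: "\<forall>x\<in>VR gs. norm x \<le> R"
    using compact_imp_bounded[OF cpt] by (auto simp: bounded_iff)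
  define K where "K = max 1 R"
  have "\<bar>mmono \<alpha> x\<bar> \<le> K ^ d" if x: "x \<in> VR gs" and \<alpha>: "\<alpha> \<in> Mset d" for x \<alpha>
  proof -
    have "\<forall>i. \<bar>x $ i\<bar> \<le> K"
      using R x component_le_norm_cart[of x] unfolding K_def by (meson max.coboundedI2 order_trans)
    then have "\<bar>mmono \<alpha> x\<bar> \<le> K ^ mdeg \<alpha>" by (rule mmono_bound)
    also have "\<dots> \<le> K ^ d" using \<alpha> by (intro power_increasing) (auto simp: Mset_def K_def)
    finally show ?thesis .
  qed
  then show "\<exists>W. \<forall>x\<in>VR gs. \<forall>\<alpha>\<in>Mset d. \<bar>mmono \<alpha> x\<bar> \<le> W" by blast
  show "\<exists>\<kappa>>0. \<forall>x\<in>VR gs. \<exists>\<alpha>\<in>Mset d. \<kappa> \<le> \<bar>mmono \<alpha> x\<bar>"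
    by (intro exI[of _ 1]) (auto intro: bexI[of _ "\<lambda>_. 0"])
qed (use nonempty finite_Mset in auto)

lemma affine_characterization:
  assumes nonempty: "VR gs \<noteq> {}" and cpt: "compact (VR gs)" and f: "f \<in> PolySp d"
  shows "(delta gs f > 0 \<longleftrightarrow> f \<in> PolyTop d interior_of Pd d gs) \<and>
         (delta gs f = 0 \<longleftrightarrow> f \<in> PolyTop d frontier_of Pd d gs)"
proof -
  interpret coefficient_frame "Mset d" mmono "VR gs" by (rule affine_frame[OF nonempty cpt])
  have "Pd d gs = nonneg_cone (Mset d) mmono (VR gs)"
    by (auto simp: Pd_def nonneg_cone_def PolySp_eq_supported peval_eq_lin_eval)
  moreover have "delta gs f = Inf (lin_eval (Mset d) mmono f ` VR gs)"
    using f by (simp add: delta_def peval_eq_lin_eval)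
  moreover have "f \<in> supported (Mset d)" using f by (simp add: PolySp_eq_supported)
  ultimately show ?thesis using margin_characterization[of f] unfolding PolySp_eq_supported by simp
qed

definition VRh_sphere :: "('n::finite) mpoly_c list \<Rightarrow> (real \<times> (real^'n)) set" where
  "VRh_sphere gs = {y \<in> VRh gs. norm y = 1 \<and> fst y \<ge> 0}"

lemma sphere_point:
  assumes polys: "\<forall>g\<in>set gs. is_poly g" and x: "x \<in> VR gs"
  defines "s \<equiv> 1 / norm (1::real, x)"
  shows "s > 0" "(s, s *\<^sub>R x) \<in> VRh_sphere gs"
    "\<And>f. f \<in> PolySp d \<Longrightarrow> hom_eval d f (s, s *\<^sub>R x) = s ^ d * peval f x"
proof -
  have N: "norm (1::real, x) \<ge> 1" using norm_fst_le[of "1::real" x] by simp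
  then show s0: "s > 0" unfolding s_def by (intro divide_pos_pos) auto
  have "norm (s, s *\<^sub>R x) = s * norm (1::real, x)"
    using s0 norm_scaleR[of s "(1::real, x)"] by simp
  also have "\<dots> = 1" using N by (simp add: s_def zero_prod_def)
  finally show "(s, s *\<^sub>R x) \<in> VRh_sphere gs"
    using VR_to_VRh[OF polys x] s0 by (simp add: VRh_sphere_def)
  fix f :: "'a mpoly_c" assume "f \<in> PolySp d"
  then show "hom_eval d f (s, s *\<^sub>R x) = s ^ d * peval f x"
    using hom_eval_scale[of f d s 1 x] by (simp add: PolySp_def hom_eval_one)
qed

text \<open>Closedness at infinity is exactly what makes nonnegativity on the variety propagate, by
  continuity, to the points at infinity of the homogenized variety.\<close>
lemma hom_eval_nonneg_at_infinity:
  assumes cai: "closed_at_infinity gs" and polys: "\<forall>g\<in>set gs. is_poly g"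
    and f: "f \<in> Pd d gs" and y: "y \<in> VRh gs" "fst y \<ge> 0"
  shows "hom_eval d f y \<ge> 0"
proof -
  have deg: "\<forall>\<alpha>. f \<alpha> \<noteq> 0 \<longrightarrow> mdeg \<alpha> \<le> d" using f by (simp add: Pd_def PolySp_def)
  have "closed {y. 0 \<le> hom_eval d f y}"
    unfolding hom_eval_def by (intro closed_Collect_le continuous_intros)
  moreover have "VRh gs \<inter> {y. fst y > 0} \<subseteq> {y. 0 \<le> hom_eval d f y}"
  proof safe
    fix a z assume az: "(a, z) \<in> VRh gs" "fst (a, z) > 0"
    then have "peval f ((1 / a) *\<^sub>R z) \<ge> 0"
      using VRh_to_VR[OF polys] f by (auto simp: Pd_def)
    moreover have "hom_eval d f (a * 1, a *\<^sub>R ((1 / a) *\<^sub>R z)) = a ^ d * hom_eval d f (1, (1 / a) *\<^sub>R z)"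
      by (rule hom_eval_scale[OF deg])
    moreover have "(a * 1, a *\<^sub>R ((1 / a) *\<^sub>R z)) = (a, z)" using az by simp
    ultimately show "0 \<le> hom_eval d f (a, z)" using az by (simp add: hom_eval_one)
  qed
  ultimately have "closure (VRh gs \<inter> {y. fst y > 0}) \<subseteq> {y. 0 \<le> hom_eval d f y}"
    by (rule closure_minimal[rotated])
  moreover have "y \<in> closure (VRh gs \<inter> {y. fst y > 0})"
    using cai y unfolding closed_at_infinity_def by blast
  ultimately show ?thesis by blast
qed

text \<open>Under closedness at infinity, \<open>P_d(g)\<close> is the cone of forms nonnegative on the
  half-sphere; the converse inclusion needs only the ray representation of the variety.\<close>
lemma Pd_eq_sphere_cone:
  assumes cai: "closed_at_infinity gs" and polys: "\<forall>g\<in>set gs. is_poly g"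
  shows "Pd d gs = nonneg_cone (Mset d) (hmono d) (VRh_sphere gs)"
proof (intro equalityI subsetI)
  fix f assume f: "f \<in> Pd d gs"
  then show "f \<in> nonneg_cone (Mset d) (hmono d) (VRh_sphere gs)"
    using hom_eval_nonneg_at_infinity[OF cai polys f]
    by (auto simp: nonneg_cone_def VRh_sphere_def Pd_def PolySp_eq_supported hom_eval_eq_lin_eval)
next
  fix f assume f: "f \<in> nonneg_cone (Mset d) (hmono d) (VRh_sphere gs)"
  then have fP: "f \<in> PolySp d" by (simp add: nonneg_cone_def PolySp_eq_supported)
  have "peval f x \<ge> 0" if x: "x \<in> VR gs" for x
  proof -
    define s where "s = 1 / norm (1::real, x)"
    have "0 \<le> hom_eval d f (s, s *\<^sub>R x)"
      using f sphere_point(2)[OF polys x] fP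
      by (simp add: nonneg_cone_def s_def hom_eval_eq_lin_eval)
    then have "0 \<le> s ^ d * peval f x" using sphere_point(3)[OF polys x fP] by (simp add: s_def)
    moreover have "0 < s ^ d" using sphere_point(1)[OF polys x] by (simp add: s_def)
    ultimately show ?thesis by (simp add: zero_le_mult_iff)
  qed
  then show "f \<in> Pd d gs" using fP by (simp add: Pd_def)
qed

lemma unit_vector_large_coordinate:
  fixes a :: real and z :: "real^'n::finite"
  assumes "norm (a, z) = 1"
  defines "c \<equiv> 1 / (real CARD('n) + 1)"
  shows "c \<le> \<bar>a\<bar> \<or> (\<exists>j. c \<le> \<bar>z $ j\<bar>)"
proof (rule ccontr)
  assume "\<not> ?thesis"
  then have small: "\<bar>a\<bar> < c" "\<forall>j. \<bar>z $ j\<bar> < c" by (auto simp: not_le)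
  have "c \<le> 1" by (simp add: c_def)
  have sq: "b * b < c" if "\<bar>b\<bar> < c" for b :: real
  proof -
    have "\<bar>b\<bar> * \<bar>b\<bar> \<le> \<bar>b\<bar> * 1" using that \<open>c \<le> 1\<close> by (intro mult_left_mono) auto
    then show ?thesis using that by (simp add: abs_mult_self_eq)
  qed
  have "1 = (norm (a, z))\<^sup>2" using assms(1) by simp
  also have "\<dots> = a * a + inner z z" by (simp add: norm_Pair dot_square_norm power2_eq_square)
  also have "inner z z = (\<Sum>j\<in>UNIV. z $ j * z $ j)" by (simp add: inner_vec_def)
  finally have "1 = a * a + (\<Sum>j\<in>UNIV. z $ j * z $ j)" .
  moreover have "(\<Sum>j\<in>UNIV. z $ j * z $ j) \<le> real CARD('n) * c"
    by (rule sum_bounded_above) (use sq small in \<open>auto intro: less_imp_le\<close>)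
  moreover have "c + real CARD('n) * c = 1" by (simp add: c_def field_simps)
  ultimately show False using sq[OF small(1)] by linarith
qed

lemma hmono_const: "hmono d (\<lambda>_. 0) (a, z) = a ^ d"
  by (simp add: hmono_def mdeg_def)

lemma hmono_coordinate_power:
  "hmono d (\<lambda>i. if i = j then d else 0) (a, z) = (z $ j) ^ d"
  "(\<lambda>i. if i = j then d else 0) \<in> Mset d"
proof -
  have md: "mdeg (\<lambda>i. if i = j then d else 0) = d" by (simp add: mdeg_def)
  have "(\<Prod>i\<in>UNIV. (z $ i) ^ (if i = j then d else 0)) = (\<Prod>i\<in>UNIV. if i = j then (z $ j) ^ d else 1)"
    by (rule prod.cong) auto
  then have "mmono (\<lambda>i. if i = j then d else 0) z = (z $ j) ^ d" by (simp add: mmono_def)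
  then show "hmono d (\<lambda>i. if i = j then d else 0) (a, z) = (z $ j) ^ d" by (simp add: hmono_def md)
  show "(\<lambda>i. if i = j then d else 0) \<in> Mset d" by (simp add: Mset_def md)
qed

text \<open>On the unit sphere all homogenized monomials are bounded by one, and the powers
  \<open>x\<^sub>0^d\<close>, \<open>x\<^sub>j^d\<close> cannot all be small.\<close>
lemma sphere_frame:
  fixes gs :: "('n::finite) mpoly_c list"
  assumes polys: "\<forall>g\<in>set gs. is_poly g" and nonempty: "VR gs \<noteq> {}"
  shows "coefficient_frame (Mset d) (hmono d) (VRh_sphere gs)"
proof
  have coords: "\<bar>fst y\<bar> \<le> 1" "\<bar>snd y $ i\<bar> \<le> 1" if "y \<in> VRh_sphere gs" for y i
    using that norm_fst_le[of "fst y" "snd y"] norm_snd_le[of "snd y" "fst y"]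
      component_le_norm_cart[of "snd y" i] by (auto simp: VRh_sphere_def)
  have "\<bar>hmono d \<alpha> y\<bar> \<le> 1" if "y \<in> VRh_sphere gs" for y \<alpha>
  proof -
    have "\<bar>mmono \<alpha> (snd y)\<bar> \<le> 1" using mmono_bound[of "snd y" 1 \<alpha>] coords[OF that] by simp
    moreover have "\<bar>fst y ^ (d - mdeg \<alpha>)\<bar> \<le> 1"
      using coords(1)[OF that] by (simp add: power_abs power_le_one)
    ultimately show ?thesis by (simp add: hmono_def abs_mult mult_le_one)
  qed
  then show "\<exists>W. \<forall>y\<in>VRh_sphere gs. \<forall>\<alpha>\<in>Mset d. \<bar>hmono d \<alpha> y\<bar> \<le> W" by blast
  define c where "c = 1 / (real CARD('n) + 1)"
  have "\<exists>\<alpha>\<in>Mset d. c ^ d \<le> \<bar>hmono d \<alpha> (a, z)\<bar>" if "(a, z) \<in> VRh_sphere gs" for a z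
  proof -
    have "c \<le> \<bar>a\<bar> \<or> (\<exists>j. c \<le> \<bar>z $ j\<bar>)"
      using that unit_vector_large_coordinate[of a z] by (simp add: VRh_sphere_def c_def)
    moreover have "0 \<le> c" by (simp add: c_def)
    ultimately show ?thesis
    proof (elim disjE exE)
      assume "c \<le> \<bar>a\<bar>"
      then have "c ^ d \<le> \<bar>hmono d (\<lambda>_. 0) (a, z)\<bar>"
        using \<open>0 \<le> c\<close> by (simp add: hmono_const power_abs power_mono)
      then show ?thesis using const_in_Mset by blast
    next
      fix j assume "c \<le> \<bar>z $ j\<bar>"
      then have "c ^ d \<le> \<bar>hmono d (\<lambda>i. if i = j then d else 0) (a, z)\<bar>"
        using \<open>0 \<le> c\<close> by (simp add: hmono_coordinate_power(1) power_abs power_mono)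
      then show ?thesis using hmono_coordinate_power(2) by blast
    qed
  qed
  moreover have "0 < c ^ d" by (simp add: c_def)
  ultimately show "\<exists>\<kappa>>0. \<forall>y\<in>VRh_sphere gs. \<exists>\<alpha>\<in>Mset d. \<kappa> \<le> \<bar>hmono d \<alpha> y\<bar>" by auto
  show "VRh_sphere gs \<noteq> {}" using nonempty sphere_point(2)[OF polys] by blast
qed (rule finite_Mset)

lemma homogeneous_characterization:
  assumes polys: "\<forall>g\<in>set gs. is_poly g" and nonempty: "VR gs \<noteq> {}"
    and cai: "closed_at_infinity gs" and f: "f \<in> PolySp d"
  shows "(delta_h d gs f > 0 \<longleftrightarrow> f \<in> PolyTop d interior_of Pd d gs) \<and>
         (delta_h d gs f = 0 \<longleftrightarrow> f \<in> PolyTop d frontier_of Pd d gs)"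
proof -
  interpret coefficient_frame "Mset d" "hmono d" "VRh_sphere gs"
    by (rule sphere_frame[OF polys nonempty])
  have "delta_h d gs f = Inf (lin_eval (Mset d) (hmono d) f ` VRh_sphere gs)"
    using f by (simp add: delta_h_def VRh_sphere_def hom_eval_eq_lin_eval)
  moreover have "f \<in> supported (Mset d)" using f by (simp add: PolySp_eq_supported)
  ultimately show ?thesis
    using margin_characterization[of f] unfolding Pd_eq_sphere_cone[OF cai polys] PolySp_eq_supported
    by simp
qed

theorem mainTheorem9:
  fixes gs :: "('n::finite) mpoly_c list" and d :: nat
  assumes polys: "\<forall>g\<in>set gs. is_poly g"
    and nonempty: "VR gs \<noteq> {}"
    and d: "d \<ge> 1"
  shows "(compact (VR gs) \<longrightarrow>
            (\<forall>f\<in>PolySp d.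
               (delta gs f > 0 \<longleftrightarrow> f \<in> PolyTop d interior_of Pd d gs) \<and>
               (delta gs f = 0 \<longleftrightarrow> f \<in> PolyTop d frontier_of Pd d gs)))
       \<and> (closed_at_infinity gs \<longrightarrow>
            (\<forall>f\<in>PolySp d.
               (delta_h d gs f > 0 \<longleftrightarrow> f \<in> PolyTop d interior_of Pd d gs) \<and>
               (delta_h d gs f = 0 \<longleftrightarrow> f \<in> PolyTop d frontier_of Pd d gs)))"
  using affine_characterization[OF nonempty] homogeneous_characterization[OF polys nonempty]
  by blast

end
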